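(* Let $X$ take values in a countable set $\mathcal{X}$, $T\in\{0,1\}$, and $Y$ take values in a countable set $\mathcal{Y}\subseteq\mathbb{R}$, with joint distribution $P$, and let $Q(T\mid X)$ be a model with $Q(T=t\mid X=x)>0$ for all $t,x$. Fix $t\in\{0,1\}$ with $P(T=t)>0$ and $y\in\mathcal{Y}$ with $Z_{y,t}:=\sum_{x}P(Y=y\mid X=x,T=t)P(X=x)\in(0,\infty)$. For a model $M\in\{P,Q\}$ define $$\pi_{y,t}(M)=\sum_{x\in\mathcal{X}}P(Y=y\mid X=x,T=t)\,\frac{P(X=x\mid T=t)}{M(T=t\mid X=x)}.$$ Let $R_{y,t}$ be the distribution on $\mathcal{X}$ with $R_{y,t}(x)=P(Y=y\mid X=x,T=t)P(X=x)/Z_{y,t}$, let $\ell_t(x)=\left(1-\frac{P(T=t\mid X=x)}{Q(T=t\mid X=x)}\right)^2$, and let $k'_{y,t}=Z_{y,t}/P(T=t)$. Then $$|\pi_{y,t}(P)-\pi_{y,t}(Q)|\le k'_{y,t}\,\mathbb{E}_{X\sim R_{y,t}}\big[\ell_t(X)^{1/2}\big].$$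
   Context: Here $P(Y=y\mid X=x,T=t)$, $P(X=x\mid T=t)$, $P(T=t\mid X=x)$ denote conditional probabilities under the data distribution $P$, and $Q(T=t\mid X=x)$ is a propensity score model used in an inverse probability of treatment weighting estimator. *)

theory Defs
  imports "HOL-Probability.Probability"
begin

text \<open>The joint distribution P of (X, T, Y) is a pmf on triples (x, t, y),
  with X in a countable type, T a natural number (supported on 0,1), Y real.\<close>

definition pX :: "('x \<times> nat \<times> real) pmf \<Rightarrow> 'x \<Rightarrow> real" where
  "pX P x = measure_pmf.prob P {w. fst w = x}"

definition pT :: "('x \<times> nat \<times> real) pmf \<Rightarrow> nat \<Rightarrow> real" where
  "pT P t = measure_pmf.prob P {w. fst (snd w) = t}"

definition pXT :: "('x \<times> nat \<times> real) pmf \<Rightarrow> 'x \<Rightarrow> nat \<Rightarrow> real" where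
  "pXT P x t = measure_pmf.prob P {w. fst w = x \<and> fst (snd w) = t}"

definition pXTY :: "('x \<times> nat \<times> real) pmf \<Rightarrow> 'x \<Rightarrow> nat \<Rightarrow> real \<Rightarrow> real" where
  "pXTY P x t y = measure_pmf.prob P {w. fst w = x \<and> fst (snd w) = t \<and> snd (snd w) = y}"

definition condY :: "('x \<times> nat \<times> real) pmf \<Rightarrow> real \<Rightarrow> 'x \<Rightarrow> nat \<Rightarrow> real" where
  "condY P y x t = pXTY P x t y / pXT P x t"

definition condX :: "('x \<times> nat \<times> real) pmf \<Rightarrow> 'x \<Rightarrow> nat \<Rightarrow> real" where
  "condX P x t = pXT P x t / pT P t"

definition condT :: "('x \<times> nat \<times> real) pmf \<Rightarrow> nat \<Rightarrow> 'x \<Rightarrow> real" where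
  "condT P t x = pXT P x t / pX P x"

definition Zyt :: "('x \<times> nat \<times> real) pmf \<Rightarrow> real \<Rightarrow> nat \<Rightarrow> real" where
  "Zyt P y t = (\<Sum>\<^sub>\<infinity>x. condY P y x t * pX P x)"

text \<open>pi_{y,t}(M), where M x s is the propensity M(T=s | X=x).\<close>
definition pi_yt :: "('x \<times> nat \<times> real) pmf \<Rightarrow> real \<Rightarrow> nat \<Rightarrow> ('x \<Rightarrow> nat \<Rightarrow> real) \<Rightarrow> real" where
  "pi_yt P y t M = (\<Sum>\<^sub>\<infinity>x. condY P y x t * condX P x t / M x t)"

definition R_yt :: "('x \<times> nat \<times> real) pmf \<Rightarrow> real \<Rightarrow> nat \<Rightarrow> 'x pmf" where
  "R_yt P y t = embed_pmf (\<lambda>x. condY P y x t * pX P x / Zyt P y t)"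

definition ell :: "('x \<times> nat \<times> real) pmf \<Rightarrow> ('x \<Rightarrow> nat pmf) \<Rightarrow> nat \<Rightarrow> 'x \<Rightarrow> real" where
  "ell P Q t x = (1 - condT P t x / pmf (Q x) t) ^ 2"

end

theory Submission
  imports Defs
begin

text \<open>By Bayes' rule \<open>P(X=x | T=t) = P(T=t | X=x) P(X=x) / P(T=t)\<close>, so with the weights
  \<open>w x = P(Y=y | X=x, T=t) P(X=x) / P(T=t)\<close> and the ratios \<open>\<rho> x = P(T=t | X=x) / Q(T=t | X=x)\<close>
  the two estimators are \<open>\<Sum>\<^sub>x w x\<close> and \<open>\<Sum>\<^sub>x w x \<rho> x\<close>.  Their difference is at most
  \<open>\<Sum>\<^sub>x w x \<bar>1 - \<rho> x\<bar> = \<Sum>\<^sub>x w x \<surd>\<ell>\<^sub>t(x)\<close>, and \<open>w\<close> is \<open>k'\<^sub>y\<^sub>,\<^sub>t\<close> times the density of \<open>R\<^sub>y\<^sub>,\<^sub>t\<close>.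
  The bound lives in \<open>ennreal\<close>, so it is trivial when the right-hand side diverges; otherwise the
  termwise bound makes the second series summable.\<close>

lemma nn_integral_count_space_eq_infsum:
  fixes f :: "'a \<Rightarrow> real"
  assumes "f summable_on A" and "\<And>x. x \<in> A \<Longrightarrow> f x \<ge> 0"
  shows "(\<integral>\<^sup>+ x. ennreal (f x) \<partial>count_space A) = ennreal (infsum f A)"
proof -
  have "Infinite_Set_Sum.abs_summable_on f A"
    using assms(1) abs_summable_equivalent summable_on_iff_abs_summable_on_real by blast
  then show ?thesis
    using assms by (simp add: nn_integral_conv_infsetsum infsetsum_infsum)
qed

lemma summable_on_if_nn_integral_count_space_finite:
  fixes f :: "'a \<Rightarrow> real"
  assumes "(\<integral>\<^sup>+ x. ennreal (f x) \<partial>count_space A) \<noteq> \<top>" and "\<And>x. x \<in> A \<Longrightarrow> f x \<ge> 0"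
  shows "f summable_on A"
proof -
  have "integrable (count_space A) f"
    using assms by (intro integrableI_nonneg) (simp_all add: AE_count_space top.not_eq_extremum)
  then have "Infinite_Set_Sum.abs_summable_on f A"
    by (simp add: abs_summable_on_def)
  then show ?thesis
    using abs_summable_equivalent summable_on_iff_abs_summable_on_real by blast
qed

lemma abs_infsum_diff_le_nn_integral_count_space:
  fixes f g :: "'a \<Rightarrow> real"
  assumes f: "f summable_on A" and g_nonneg: "\<And>x. x \<in> A \<Longrightarrow> g x \<ge> 0"
  shows "ennreal \<bar>infsum f A - infsum g A\<bar> \<le> (\<integral>\<^sup>+ x. ennreal \<bar>f x - g x\<bar> \<partial>count_space A)"
proof (cases "(\<integral>\<^sup>+ x. ennreal \<bar>f x - g x\<bar> \<partial>count_space A) = \<top>")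
  case False
  define d where "d x = \<bar>f x - g x\<bar>" for x
  have d: "d summable_on A"
    using False by (intro summable_on_if_nn_integral_count_space_finite) (auto simp: d_def)
  have f_le: "f x \<le> g x + d x" and g_le: "g x \<le> f x + d x" for x
    unfolding d_def by arith+
  have g: "g summable_on A"
    using g_le g_nonneg by (intro summable_on_comparison_test[OF summable_on_add[OF f d]])
  have "infsum f A \<le> infsum g A + infsum d A"
    using infsum_mono[OF f summable_on_add[OF g d] f_le] by (simp only: infsum_add[OF g d])
  moreover have "infsum g A \<le> infsum f A + infsum d A"
    using infsum_mono[OF g summable_on_add[OF f d] g_le] by (simp only: infsum_add[OF f d])
  ultimately have "\<bar>infsum f A - infsum g A\<bar> \<le> infsum d A"
    by linarith
  then have "ennreal \<bar>infsum f A - infsum g A\<bar> \<le> ennreal (infsum d A)"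
    by (rule ennreal_leI)
  also have "\<dots> = (\<integral>\<^sup>+ x. ennreal (d x) \<partial>count_space A)"
    using d by (rule nn_integral_count_space_eq_infsum[symmetric]) (simp add: d_def)
  finally show ?thesis
    by (simp only: d_def)
qed simp

lemma pXT_le_pX: "pXT P x t \<le> pX P x"
  unfolding pXT_def pX_def by (rule measure_pmf.finite_measure_mono) auto

lemma condY_nonneg: "condY P y x t \<ge> 0"
  by (simp add: condY_def pXTY_def pXT_def)

lemma condT_nonneg: "condT P t x \<ge> 0"
  by (simp add: condT_def pXT_def pX_def)

lemma pX_nonneg: "pX P x \<ge> 0"
  by (simp add: pX_def)

lemma pXT_eq_0_if_pX_eq_0: "pX P x = 0 \<Longrightarrow> pXT P x t = 0"
  using pXT_le_pX[of P x t] by (simp add: pXT_def order_antisym)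

lemma condX_Bayes: "condX P x t = condT P t x * pX P x / pT P t"
  by (cases "pX P x = 0") (simp_all add: condX_def condT_def pXT_eq_0_if_pX_eq_0)

lemma condY_mult_condX_div_condT:
  "condY P y x t * condX P x t / condT P t x = condY P y x t * pX P x / pT P t"
proof (cases "pXT P x t = 0")
  case False
  then have "pX P x \<noteq> 0"
    using pXT_eq_0_if_pX_eq_0 by metis
  with False show ?thesis
    by (simp add: condX_def condT_def)
qed (simp add: condY_def condX_def)

lemma pmf_R_yt:
  assumes "Zyt P y t \<noteq> 0"
  shows "pmf (R_yt P y t) x = condY P y x t * pX P x / Zyt P y t"
proof -
  define w where "w x = condY P y x t * pX P x" for x
  have w_nonneg: "w x \<ge> 0" for x
    by (simp add: w_def condY_nonneg pX_nonneg)
  have Z: "Zyt P y t = infsum w UNIV"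
    unfolding Zyt_def w_def ..
  then have "w summable_on UNIV"
    using assms infsum_not_exists by metis
  then have "(\<lambda>x. w x / Zyt P y t) summable_on UNIV"
    by (simp add: divide_inverse summable_on_cmult_left)
  moreover have "infsum (\<lambda>x. w x / Zyt P y t) UNIV = 1"
    using assms by (simp add: Z divide_inverse infsum_cmult_left')
  moreover have Z_nonneg: "Zyt P y t \<ge> 0"
    unfolding Z using w_nonneg by (rule infsum_nonneg)
  ultimately have "(\<integral>\<^sup>+ x. ennreal (w x / Zyt P y t) \<partial>count_space UNIV) = 1"
    using w_nonneg by (subst nn_integral_count_space_eq_infsum) auto
  then show ?thesis
    unfolding R_yt_def using w_nonneg Z_nonneg
    by (subst pmf_embed_pmf) (auto simp flip: w_def)
qed

lemma scaled_nn_integral_R_yt: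
  assumes "Zyt P y t \<noteq> 0" and "\<And>x. h x \<ge> 0"
  shows "ennreal (Zyt P y t / pT P t) * (\<integral>\<^sup>+ x. ennreal (h x) \<partial>measure_pmf (R_yt P y t))
    = (\<integral>\<^sup>+ x. ennreal (condY P y x t * pX P x / pT P t * h x) \<partial>count_space UNIV)"
proof -
  have scale_nonneg: "Zyt P y t / pT P t \<ge> 0"
    by (simp add: Zyt_def pT_def infsum_nonneg condY_nonneg pX_nonneg)
  have "ennreal (Zyt P y t / pT P t) * (ennreal (pmf (R_yt P y t) x) * ennreal (h x))
      = ennreal (condY P y x t * pX P x / pT P t * h x)" for x
  proof -
    have "ennreal (Zyt P y t / pT P t) * (ennreal (pmf (R_yt P y t) x) * ennreal (h x))
        = ennreal (Zyt P y t / pT P t * pmf (R_yt P y t) x * h x)"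
      by (metis scale_nonneg ennreal_mult' mult.assoc pmf_nonneg mult_nonneg_nonneg)
    also have "Zyt P y t / pT P t * pmf (R_yt P y t) x = condY P y x t * pX P x / pT P t"
      using assms(1) by (simp add: pmf_R_yt)
    finally show ?thesis .
  qed
  then show ?thesis
    unfolding nn_integral_measure_pmf by (simp flip: nn_integral_cmult)
qed

lemma pi_yt_condT_eq_infsum:
  "pi_yt P y t (\<lambda>x s. condT P s x) = (\<Sum>\<^sub>\<infinity>x. condY P y x t * pX P x / pT P t)"
  by (simp add: pi_yt_def condY_mult_condX_div_condT)

lemma pi_yt_eq_infsum_reweighted:
  "pi_yt P y t M = (\<Sum>\<^sub>\<infinity>x. condY P y x t * pX P x / pT P t * (condT P t x / M x t))"
  by (simp add: pi_yt_def condX_Bayes mult_ac)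

theorem mainTheorem2:
  fixes P :: "('x::countable \<times> nat \<times> real) pmf"
    and Q :: "'x \<Rightarrow> nat pmf"
    and t :: nat and y :: real
  assumes T_binary: "\<forall>w\<in>set_pmf P. fst (snd w) \<in> {0, 1}"
    and Q_binary: "\<forall>x. set_pmf (Q x) \<subseteq> {0, 1}"
    and Q_pos: "\<forall>x. \<forall>s\<in>{0, 1}. pmf (Q x) s > 0"
    and t01: "t \<in> {0, 1}"
    and pT_pos: "pT P t > 0"
    and Z_pos: "Zyt P y t > 0"
  shows "ennreal \<bar>pi_yt P y t (\<lambda>x s. condT P s x) - pi_yt P y t (\<lambda>x s. pmf (Q x) s)\<bar>
           \<le> ennreal (Zyt P y t / pT P t) *
             (\<integral>\<^sup>+ x. ennreal (sqrt (ell P Q t x)) \<partial>measure_pmf (R_yt P y t))"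
proof -
  define w where "w x = condY P y x t * pX P x / pT P t" for x
  define \<rho> where "\<rho> x = condT P t x / pmf (Q x) t" for x
  have w_nonneg: "w x \<ge> 0" and \<rho>_nonneg: "\<rho> x \<ge> 0" for x
    using pT_pos by (simp_all add: w_def \<rho>_def condY_nonneg pX_nonneg condT_nonneg)
  have "Zyt P y t / pT P t = infsum w UNIV"
    unfolding Zyt_def w_def divide_inverse by (rule infsum_cmult_left'[symmetric])
  then have w: "w summable_on UNIV"
    using Z_pos pT_pos infsum_not_exists by fastforce
  have abs_diff: "\<bar>w x - w x * \<rho> x\<bar> = w x * sqrt (ell P Q t x)" for x
  proof -
    have "\<bar>w x - w x * \<rho> x\<bar> = \<bar>w x\<bar> * \<bar>1 - \<rho> x\<bar>"
      by (simp add: right_diff_distrib flip: abs_mult)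
    then show ?thesis
      using w_nonneg[of x] by (simp add: ell_def \<rho>_def)
  qed
  have "ennreal \<bar>pi_yt P y t (\<lambda>x s. condT P s x) - pi_yt P y t (\<lambda>x s. pmf (Q x) s)\<bar>
      = ennreal \<bar>infsum w UNIV - (\<Sum>\<^sub>\<infinity>x. w x * \<rho> x)\<bar>"
    by (simp only: pi_yt_condT_eq_infsum pi_yt_eq_infsum_reweighted w_def[abs_def] \<rho>_def)
  also have "\<dots> \<le> (\<integral>\<^sup>+ x. ennreal \<bar>w x - w x * \<rho> x\<bar> \<partial>count_space UNIV)"
    using w_nonneg \<rho>_nonneg by (intro abs_infsum_diff_le_nn_integral_count_space[OF w]) simp
  also have "\<dots> = (\<integral>\<^sup>+ x. ennreal (w x * sqrt (ell P Q t x)) \<partial>count_space UNIV)"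
    by (simp only: abs_diff)
  also have "\<dots> = ennreal (Zyt P y t / pT P t) *
      (\<integral>\<^sup>+ x. ennreal (sqrt (ell P Q t x)) \<partial>measure_pmf (R_yt P y t))"
    using Z_pos unfolding w_def by (intro scaled_nn_integral_R_yt[symmetric]) (simp_all add: ell_def)
  finally show ?thesis .
qed

end
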